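(* Let $U:\mathbb{R}^d\to\mathbb{R}$ be twice continuously differentiable with $\nabla U(0)=0$ and $\sup_x\|\mathrm{D}^2U(x)\|\le\mathtt{L}$, and let $\bar\gamma>0$, $L_{\bar\gamma}=2\mathtt{L}+\bar\gamma\mathtt{L}^2$. Then for any integer $k\ge1$, $\gamma\in(0,\bar\gamma]$ and $x\in\mathbb{R}^d$, $$\int_{\mathbb{R}^d}\|y\|^2Q_\gamma^k(x,dy)\le e^{k\gamma L_{\bar\gamma}}\|x\|^2+2\gamma dk\,e^{(k-1)\gamma L_{\bar\gamma}}.$$
   Context: $Q_\gamma(x,A)=\int\mathbb{1}_A(x-\gamma\nabla U(x)+\sqrt{2\gamma}z)\varphi(z)dz$ is the unadjusted Langevin kernel, $\varphi$ the standard Gaussian density on $\mathbb{R}^d$; $Q_\gamma^k$ is its $k$-th iterate. *)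

theory Defs
  imports "HOL-Probability.Probability"
begin

definition gauss_density :: "'a::euclidean_space \<Rightarrow> real" where
  "gauss_density z = (2 * pi) powr (- real DIM('a) / 2) * exp (- (norm z)\<^sup>2 / 2)"

definition std_gauss :: "'a::euclidean_space measure" where
  "std_gauss = density lborel (\<lambda>z. ennreal (gauss_density z))"

text \<open>Unadjusted Langevin kernel Q_gamma(x, .), with G the gradient of U:
  the law of x - gamma G(x) + sqrt(2 gamma) Z, Z standard Gaussian.\<close>
definition ula_kernel :: "('a::euclidean_space \<Rightarrow> 'a) \<Rightarrow> real \<Rightarrow> 'a \<Rightarrow> 'a measure" where
  "ula_kernel G \<gamma> x = distr std_gauss borel (\<lambda>z. x - \<gamma> *\<^sub>R G x + sqrt (2 * \<gamma>) *\<^sub>R z)"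

fun ula_iter :: "('a::euclidean_space \<Rightarrow> 'a) \<Rightarrow> real \<Rightarrow> nat \<Rightarrow> 'a \<Rightarrow> 'a measure" where
  "ula_iter G \<gamma> 0 x = return borel x"
| "ula_iter G \<gamma> (Suc k) x = bind (ula_iter G \<gamma> k x) (ula_kernel G \<gamma>)"

end

theory Submission
  imports Defs
begin

(* One step of the chain maps y to y - gamma grad U(y) plus Gaussian noise of variance 2 gamma
   per coordinate, so its second moment is exactly |y - gamma grad U(y)|^2 + 2 gamma d. Since
   grad U is L-Lipschitz and vanishes at 0, the drift part is at most
   (1 + 2 gamma L + gamma^2 L^2) |y|^2 <= a |y|^2 with a = exp (gamma L_gammabar). Iterating this
   drift inequality gives a^k |x|^2 + 2 gamma d (1 + a + ... + a^(k-1)), and the geometric sum is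
   at most k a^(k-1). *)

lemma power2_norm_eq_sum_Basis:
  "(norm (z::'a::euclidean_space))\<^sup>2 = (\<Sum>b\<in>Basis. (z \<bullet> b)\<^sup>2)"
  unfolding power2_norm_eq_inner by (subst euclidean_inner) (simp add: power2_eq_square)

lemma gauss_density_eq_prod_std_normal_density:
  "gauss_density (z::'a::euclidean_space) = (\<Prod>b\<in>Basis. std_normal_density (z \<bullet> b))"
proof -
  have "(2 * pi) powr (- real DIM('a) / 2) = inverse (((2 * pi) powr (1 / 2)) powr real DIM('a))"
    by (simp add: powr_minus[symmetric] powr_powr)
  also have "\<dots> = (1 / sqrt (2 * pi)) ^ DIM('a)"
    by (simp add: powr_half_sqrt powr_realpow power_one_over inverse_eq_divide)
  finally have normalisation: "(2 * pi) powr (- real DIM('a) / 2) = (1 / sqrt (2 * pi)) ^ DIM('a)" .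
  have "exp (- (norm z)\<^sup>2 / 2) = (\<Prod>b\<in>Basis. exp (- (z \<bullet> b)\<^sup>2 / 2))"
    by (simp add: power2_norm_eq_sum_Basis exp_sum[symmetric] sum_negf sum_divide_distrib)
  with normalisation show ?thesis
    unfolding gauss_density_def std_normal_density_def prod.distrib prod_constant by (simp only:)
qed

lemma gauss_density_nonneg: "0 \<le> gauss_density z"
  by (simp add: gauss_density_def)

lemma borel_measurable_gauss_density [measurable]: "gauss_density \<in> borel_measurable borel"
  unfolding gauss_density_def by measurable

lemma sets_std_gauss [measurable_cong, simp]: "sets std_gauss = sets borel"
  by (simp add: std_gauss_def)

lemma nn_integral_std_normal_density: "(\<integral>\<^sup>+t. ennreal (std_normal_density t) \<partial>lborel) = 1"
  by (subst nn_integral_eq_integral[OF integrable_normal_density])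
     (simp_all add: normal_density_nonneg integral_normal_density)

lemma nn_integral_std_gauss_coordinate:
  fixes b' :: "'a::euclidean_space"
  assumes b': "b' \<in> Basis" and [measurable]: "h \<in> borel_measurable borel" and h_nonneg: "\<And>t. 0 \<le> h t"
  shows "(\<integral>\<^sup>+z. ennreal (h (z \<bullet> b')) \<partial>(std_gauss::'a measure))
       = (\<integral>\<^sup>+t. ennreal (std_normal_density t * h t) \<partial>lborel)"
proof -
  define f where "f b t = std_normal_density t * (if b = b' then h t else 1)" for b t
  have [measurable]: "f b \<in> borel_measurable borel" for b
    unfolding f_def by measurable
  have f_nonneg: "0 \<le> f b t" for b t
    unfolding f_def using h_nonneg by simp
  have "(\<integral>\<^sup>+z. ennreal (h (z \<bullet> b')) \<partial>(std_gauss::'a measure))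
      = (\<integral>\<^sup>+z. ennreal (gauss_density z) * ennreal (h (z \<bullet> b')) \<partial>lborel)"
    unfolding std_gauss_def by (subst nn_integral_density) auto
  also have "\<dots> = (\<integral>\<^sup>+z. ennreal (\<Prod>b\<in>Basis. f b (z \<bullet> b)) \<partial>lborel)"
  proof (rule nn_integral_cong)
    fix z :: 'a
    have "(\<Prod>b\<in>Basis. f b (z \<bullet> b))
        = (\<Prod>b\<in>Basis. std_normal_density (z \<bullet> b)) * (\<Prod>b\<in>Basis. if b = b' then h (z \<bullet> b) else 1)"
      unfolding f_def prod.distrib by simp
    also have "\<dots> = gauss_density z * h (z \<bullet> b')"
      using b' by (simp add: gauss_density_eq_prod_std_normal_density)
    finally show "ennreal (gauss_density z) * ennreal (h (z \<bullet> b')) = ennreal (\<Prod>b\<in>Basis. f b (z \<bullet> b))"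
      by (simp add: ennreal_mult' gauss_density_nonneg h_nonneg)
  qed
  also have "\<dots> = (\<Prod>b\<in>Basis. \<integral>\<^sup>+t. f b t \<partial>lborel)"
    by (subst prod_ennreal[symmetric], simp add: f_nonneg, rule nn_integral_lborel_prod)
       (auto simp: f_nonneg)
  also have "\<dots> = (\<Prod>b\<in>Basis. if b = b' then \<integral>\<^sup>+t. ennreal (std_normal_density t * h t) \<partial>lborel else 1)"
    by (rule prod.cong) (auto simp: f_def nn_integral_std_normal_density)
  finally show ?thesis
    using b' by simp
qed

lemma prob_space_std_gauss: "prob_space (std_gauss :: 'a::euclidean_space measure)"
proof
  obtain b' :: 'a where b': "b' \<in> Basis"
    using nonempty_Basis by blast
  have "emeasure (std_gauss :: 'a measure) (space std_gauss) = (\<integral>\<^sup>+z. ennreal 1 \<partial>(std_gauss :: 'a measure))"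
    by (simp add: nn_integral_const)
  also have "\<dots> = 1"
    using nn_integral_std_gauss_coordinate[OF b', of "\<lambda>_. 1"] by (simp add: nn_integral_std_normal_density)
  finally show "emeasure (std_gauss :: 'a measure) (space std_gauss) = 1" .
qed

lemma nn_integral_std_normal_affine_sq:
  "(\<integral>\<^sup>+t. ennreal (std_normal_density t * (a + c * t)\<^sup>2) \<partial>lborel) = ennreal (a\<^sup>2 + c\<^sup>2)"
proof -
  have expand: "std_normal_density t * (a + c * t)\<^sup>2 = a\<^sup>2 * (std_normal_density t * t ^ (2 * 0))
     + (2 * a * c) * (std_normal_density t * t ^ (2 * 0 + 1)) + c\<^sup>2 * (std_normal_density t * t ^ (2 * 1))" for t
    by (simp add: power2_eq_square algebra_simps)
  have "has_bochner_integral lborel (\<lambda>t. std_normal_density t * (a + c * t)\<^sup>2)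
      (a\<^sup>2 * 1 + (2 * a * c) * 0 + c\<^sup>2 * 1)"
    unfolding expand
    using std_normal_moment_even[of 0] std_normal_moment_odd[of 0] std_normal_moment_even[of 1]
    by (intro has_bochner_integral_add has_bochner_integral_mult_right) simp_all
  then show ?thesis
    by (subst nn_integral_eq_integral) (auto dest: has_bochner_integral_integral_eq integrable.intros)
qed

lemma nn_integral_std_gauss_norm_affine_sq:
  fixes v :: "'a::euclidean_space"
  shows "(\<integral>\<^sup>+z. ennreal ((norm (v + c *\<^sub>R z))\<^sup>2) \<partial>(std_gauss :: 'a measure))
       = ennreal ((norm v)\<^sup>2 + c\<^sup>2 * real DIM('a))"
proof -
  have "(\<integral>\<^sup>+z. ennreal ((norm (v + c *\<^sub>R z))\<^sup>2) \<partial>(std_gauss :: 'a measure))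
      = (\<integral>\<^sup>+z. (\<Sum>b\<in>Basis. ennreal ((v \<bullet> b + c * (z \<bullet> b))\<^sup>2)) \<partial>(std_gauss :: 'a measure))"
    by (intro nn_integral_cong) (simp add: power2_norm_eq_sum_Basis sum_ennreal inner_add_left)
  also have "\<dots> = (\<Sum>b\<in>Basis. \<integral>\<^sup>+z. ennreal ((\<lambda>t. (v \<bullet> b + c * t)\<^sup>2) (z \<bullet> b)) \<partial>(std_gauss :: 'a measure))"
    by (subst nn_integral_sum) auto
  also have "\<dots> = (\<Sum>b\<in>Basis. ennreal ((v \<bullet> b)\<^sup>2 + c\<^sup>2))"
    by (intro sum.cong refl, subst nn_integral_std_gauss_coordinate)
       (auto simp: nn_integral_std_normal_affine_sq)
  also have "\<dots> = ennreal ((norm v)\<^sup>2 + c\<^sup>2 * real DIM('a))"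
    by (subst sum_ennreal) (auto simp: power2_norm_eq_sum_Basis sum.distrib mult.commute)
  finally show ?thesis .
qed

lemma ula_kernel_measurable:
  fixes G :: "'a::euclidean_space \<Rightarrow> 'a"
  assumes [measurable]: "G \<in> borel_measurable borel"
  shows "ula_kernel G \<gamma> \<in> borel \<rightarrow>\<^sub>M subprob_algebra borel"
  unfolding ula_kernel_def
proof (rule measurable_distr2[where M = std_gauss])
  show "(\<lambda>_. std_gauss) \<in> borel \<rightarrow>\<^sub>M subprob_algebra std_gauss"
    by (intro measurable_const)
       (simp add: space_subprob_algebra prob_space_imp_subprob_space[OF prob_space_std_gauss])
  have "sets (borel \<Otimes>\<^sub>M std_gauss) = sets (borel \<Otimes>\<^sub>M (borel::'a measure))"
    by (rule sets_pair_measure_cong) auto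
  then show "(\<lambda>(x, z). x - \<gamma> *\<^sub>R G x + sqrt (2 * \<gamma>) *\<^sub>R z) \<in> borel \<Otimes>\<^sub>M std_gauss \<rightarrow>\<^sub>M borel"
    unfolding measurable_cong_sets[OF _ refl] by measurable
qed

lemma nn_integral_ula_kernel_norm_sq:
  fixes G :: "'a::euclidean_space \<Rightarrow> 'a"
  assumes "0 \<le> \<gamma>"
  shows "(\<integral>\<^sup>+w. ennreal ((norm w)\<^sup>2) \<partial>ula_kernel G \<gamma> y)
       = ennreal ((norm (y - \<gamma> *\<^sub>R G y))\<^sup>2 + 2 * \<gamma> * real DIM('a))"
proof -
  have "(\<integral>\<^sup>+w. ennreal ((norm w)\<^sup>2) \<partial>ula_kernel G \<gamma> y)
      = (\<integral>\<^sup>+z. ennreal ((norm (y - \<gamma> *\<^sub>R G y + sqrt (2 * \<gamma>) *\<^sub>R z))\<^sup>2) \<partial>std_gauss)"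
    unfolding ula_kernel_def
    by (rule nn_integral_distr) (simp_all add: measurable_cong_sets[OF sets_std_gauss refl])
  also have "\<dots> = ennreal ((norm (y - \<gamma> *\<^sub>R G y))\<^sup>2 + (sqrt (2 * \<gamma>))\<^sup>2 * real DIM('a))"
    by (rule nn_integral_std_gauss_norm_affine_sq)
  finally show ?thesis
    using assms by simp
qed

lemma
  fixes G :: "'a::euclidean_space \<Rightarrow> 'a"
  assumes "G \<in> borel_measurable borel"
  shows subprob_space_ula_iter: "subprob_space (ula_iter G \<gamma> k x)"
    and sets_ula_iter [measurable_cong]: "sets (ula_iter G \<gamma> k x) = sets borel"
proof (induction k)
  case 0
  show "subprob_space (ula_iter G \<gamma> 0 x)" "sets (ula_iter G \<gamma> 0 x) = sets borel"
    by (simp_all add: subprob_space_return)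
next
  case (Suc k)
  have kernel: "ula_kernel G \<gamma> \<in> ula_iter G \<gamma> k x \<rightarrow>\<^sub>M subprob_algebra borel"
    using ula_kernel_measurable[OF assms] by (simp add: measurable_cong_sets[OF Suc.IH(2) refl])
  show "subprob_space (ula_iter G \<gamma> (Suc k) x)"
    using subprob_space_bind[OF Suc.IH(1) kernel] by simp
  show "sets (ula_iter G \<gamma> (Suc k) x) = sets borel"
    using sets_bind[OF sets_kernel[OF kernel]] subprob_space.subprob_not_empty[OF Suc.IH(1)] by simp
qed

lemma nn_integral_ula_iter_drift:
  fixes G :: "'a::euclidean_space \<Rightarrow> 'a" and V :: "'a \<Rightarrow> ennreal"
  assumes [measurable]: "G \<in> borel_measurable borel" "V \<in> borel_measurable borel"
    and drift: "\<And>y. (\<integral>\<^sup>+w. V w \<partial>ula_kernel G \<gamma> y) \<le> a * V y + D"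
  shows "(\<integral>\<^sup>+y. V y \<partial>ula_iter G \<gamma> k x) \<le> a ^ k * V x + D * (\<Sum>j<k. a ^ j)"
proof (induction k)
  case 0
  show ?case
    by (simp add: nn_integral_return)
next
  case (Suc k)
  let ?M = "ula_iter G \<gamma> k x"
  have kernel: "ula_kernel G \<gamma> \<in> ?M \<rightarrow>\<^sub>M subprob_algebra borel"
    using ula_kernel_measurable[of G \<gamma>] by (simp add: measurable_cong_sets[OF sets_ula_iter refl])
  have "(\<integral>\<^sup>+y. V y \<partial>ula_iter G \<gamma> (Suc k) x) = (\<integral>\<^sup>+y. (\<integral>\<^sup>+w. V w \<partial>ula_kernel G \<gamma> y) \<partial>?M)"
    using nn_integral_bind[OF _ kernel] by simp
  also have "\<dots> \<le> (\<integral>\<^sup>+y. a * V y + D \<partial>?M)"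
    by (intro nn_integral_mono drift)
  also have "\<dots> = a * (\<integral>\<^sup>+y. V y \<partial>?M) + D * emeasure ?M (space ?M)"
    by (simp add: nn_integral_add nn_integral_cmult)
  also have "\<dots> \<le> a * (a ^ k * V x + D * (\<Sum>j<k. a ^ j)) + D * 1"
    by (intro add_mono mult_left_mono Suc.IH subprob_space.subprob_emeasure_le_1
        subprob_space_ula_iter) simp_all
  also have "\<dots> = a ^ Suc k * V x + D * (1 + a * (\<Sum>j<k. a ^ j))"
    by (simp add: algebra_simps)
  also have "1 + a * (\<Sum>j<k. a ^ j) = (\<Sum>j<Suc k. a ^ j)"
    by (simp only: sum.lessThan_Suc_shift sum_distrib_left power_0 power_Suc)
  finally show ?case .
qed

lemma norm_le_mult_norm_if_derivative_bounded:
  fixes G :: "'a::real_normed_vector \<Rightarrow> 'b::real_normed_vector"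
  assumes "\<And>y. (G has_derivative blinfun_apply (H y)) (at y)"
    and "\<And>y. norm (H y) \<le> L" and "G 0 = 0"
  shows "norm (G y) \<le> L * norm y"
proof -
  have "norm (G y - G 0) \<le> L * norm (y - 0)"
    by (rule differentiable_bound[where S = UNIV and f' = "\<lambda>y. blinfun_apply (H y)"])
       (auto simp: assms norm_blinfun.rep_eq[symmetric])
  then show ?thesis
    by (simp add: assms(3))
qed

lemma norm_gradient_step_sq_le:
  fixes y g :: "'a::real_normed_vector"
  assumes "norm g \<le> L * norm y" and "0 \<le> \<gamma>"
  shows "(norm (y - \<gamma> *\<^sub>R g))\<^sup>2 \<le> (1 + \<gamma> * (2 * L + \<gamma> * L\<^sup>2)) * (norm y)\<^sup>2"
proof -
  have "norm (y - \<gamma> *\<^sub>R g) \<le> norm y + \<gamma> * norm g"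
    using norm_triangle_ineq4[of y "\<gamma> *\<^sub>R g"] assms(2) by simp
  also have "\<dots> \<le> (1 + \<gamma> * L) * norm y"
    using mult_left_mono[OF assms] by (simp add: algebra_simps)
  finally have "(norm (y - \<gamma> *\<^sub>R g))\<^sup>2 \<le> ((1 + \<gamma> * L) * norm y)\<^sup>2"
    by (rule power_mono) simp
  then show ?thesis
    by (simp add: power2_eq_square algebra_simps)
qed

lemma nn_integral_ula_kernel_norm_sq_le:
  fixes G :: "'a::euclidean_space \<Rightarrow> 'a"
  assumes lipschitz: "norm (G y) \<le> L * norm y" and "0 \<le> L" and "0 < \<gamma>" "\<gamma> \<le> \<gamma>bar"
  shows "(\<integral>\<^sup>+w. ennreal ((norm w)\<^sup>2) \<partial>ula_kernel G \<gamma> y)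
       \<le> ennreal (exp (\<gamma> * (2 * L + \<gamma>bar * L\<^sup>2))) * ennreal ((norm y)\<^sup>2) + ennreal (2 * \<gamma> * real DIM('a))"
proof -
  define a where "a = exp (\<gamma> * (2 * L + \<gamma>bar * L\<^sup>2))"
  have "\<gamma> * L\<^sup>2 \<le> \<gamma>bar * L\<^sup>2"
    using assms(4) by (simp add: mult_right_mono)
  then have "1 + \<gamma> * (2 * L + \<gamma> * L\<^sup>2) \<le> 1 + \<gamma> * (2 * L + \<gamma>bar * L\<^sup>2)"
    using assms(3) by simp
  also have "\<dots> \<le> a"
    unfolding a_def by (rule exp_ge_add_one_self)
  finally have growth: "1 + \<gamma> * (2 * L + \<gamma> * L\<^sup>2) \<le> a" .
  have "(norm (y - \<gamma> *\<^sub>R G y))\<^sup>2 \<le> (1 + \<gamma> * (2 * L + \<gamma> * L\<^sup>2)) * (norm y)\<^sup>2"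
    using assms(3) by (intro norm_gradient_step_sq_le[OF lipschitz]) simp
  also have "\<dots> \<le> a * (norm y)\<^sup>2"
    using growth by (rule mult_right_mono) simp
  finally have "(\<integral>\<^sup>+w. ennreal ((norm w)\<^sup>2) \<partial>ula_kernel G \<gamma> y) \<le> ennreal (a * (norm y)\<^sup>2 + 2 * \<gamma> * real DIM('a))"
    unfolding nn_integral_ula_kernel_norm_sq[OF less_imp_le[OF assms(3)]]
    by (intro ennreal_leI add_right_mono)
  also have "\<dots> = ennreal a * ennreal ((norm y)\<^sup>2) + ennreal (2 * \<gamma> * real DIM('a))"
    using assms(3) by (simp add: a_def ennreal_mult')
  finally show ?thesis
    unfolding a_def .
qed

lemma sum_lessThan_power_le:
  fixes a :: real
  assumes "1 \<le> a"
  shows "(\<Sum>j<k. a ^ j) \<le> real k * a ^ (k - 1)"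
proof -
  have "(\<Sum>j<k. a ^ j) \<le> (\<Sum>j<k. a ^ (k - 1))"
    using assms by (intro sum_mono power_increasing) auto
  then show ?thesis
    by simp
qed

theorem lemma7:
  fixes U :: "'a::euclidean_space \<Rightarrow> real"
    and G :: "'a \<Rightarrow> 'a"
    and H :: "'a \<Rightarrow> 'a \<Rightarrow>\<^sub>L 'a"
    and L \<gamma>bar \<gamma> :: real and k :: nat and x :: 'a
  assumes grad: "\<And>y. (U has_derivative (\<lambda>h. G y \<bullet> h)) (at y)"
    and hess: "\<And>y. (G has_derivative blinfun_apply (H y)) (at y)"
    and hess_cont: "continuous_on UNIV H"
    and grad0: "G 0 = 0"
    and hess_bound: "\<And>y. norm (H y) \<le> L"
    and \<gamma>bar_pos: "\<gamma>bar > 0"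
    and \<gamma>_range: "0 < \<gamma>" "\<gamma> \<le> \<gamma>bar"
    and k_ge: "k \<ge> 1"
  shows "(\<integral>\<^sup>+ y. ennreal ((norm y)\<^sup>2) \<partial>(ula_iter G \<gamma> k x))
     \<le> ennreal (exp (real k * \<gamma> * (2 * L + \<gamma>bar * L\<^sup>2)) * (norm x)\<^sup>2
        + 2 * \<gamma> * real DIM('a) * real k * exp ((real k - 1) * \<gamma> * (2 * L + \<gamma>bar * L\<^sup>2)))"
proof -
  \<comment> \<open>Only the Lipschitz bound on G enters.\<close>
  define a where "a = exp (\<gamma> * (2 * L + \<gamma>bar * L\<^sup>2))"
  define D where "D = 2 * \<gamma> * real DIM('a)"
  have "0 \<le> L"
    using hess_bound[of 0] norm_ge_zero[of "H 0"] by linarith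
  then have "1 \<le> a"
    unfolding a_def using \<gamma>_range \<gamma>bar_pos by simp
  have [measurable]: "G \<in> borel_measurable borel"
    using hess by (intro borel_measurable_continuous_onI continuous_at_imp_continuous_on)
      (meson has_derivative_continuous)
  have drift: "(\<integral>\<^sup>+w. ennreal ((norm w)\<^sup>2) \<partial>ula_kernel G \<gamma> y) \<le> ennreal a * ennreal ((norm y)\<^sup>2) + ennreal D"
    for y
    unfolding a_def D_def
    by (rule nn_integral_ula_kernel_norm_sq_le[OF norm_le_mult_norm_if_derivative_bounded[OF hess hess_bound grad0]
          \<open>0 \<le> L\<close> \<gamma>_range])
  have "(\<integral>\<^sup>+y. ennreal ((norm y)\<^sup>2) \<partial>ula_iter G \<gamma> k x)
      \<le> ennreal a ^ k * ennreal ((norm x)\<^sup>2) + ennreal D * (\<Sum>j<k. ennreal a ^ j)"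
    by (rule nn_integral_ula_iter_drift) (simp_all add: drift)
  also have "\<dots> = ennreal (a ^ k * (norm x)\<^sup>2 + D * (\<Sum>j<k. a ^ j))"
    using \<open>1 \<le> a\<close> \<gamma>_range(1) by (simp add: D_def ennreal_mult' ennreal_power sum_nonneg)
  also have "\<dots> \<le> ennreal (a ^ k * (norm x)\<^sup>2 + D * (real k * a ^ (k - 1)))"
    using sum_lessThan_power_le[OF \<open>1 \<le> a\<close>] \<gamma>_range(1)
    by (intro ennreal_leI add_left_mono mult_left_mono) (simp_all add: D_def)
  also have "a ^ k = exp (real k * \<gamma> * (2 * L + \<gamma>bar * L\<^sup>2))"
    unfolding a_def by (simp add: exp_of_nat_mult[symmetric] mult.assoc)
  also have "a ^ (k - 1) = exp ((real k - 1) * \<gamma> * (2 * L + \<gamma>bar * L\<^sup>2))"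
    unfolding a_def using k_ge by (simp add: exp_of_nat_mult[symmetric] mult.assoc of_nat_diff)
  finally show ?thesis
    by (simp add: D_def algebra_simps)
qed

end
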